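(* Let $p\ge4$. There is a constant $c_p>0$ such that the following holds. Let $n_1,\dots,n_p\in\mathbb{Z}\setminus\{0\}$ with $|n_1|\ge|n_2|\ge\cdots\ge|n_p|$ and set $n=n_1+\cdots+n_p$. Then at least one of the following is true: (I) (resonance) $n_i=n$ for some $1\le i\le p$; (II) $n_1+n_2=0$; (III) $|n_3|\ge c_p|n_1|$; (IV) $|\Phi_p(n_1,\dots,n_p)|=|n^5-n_1^5-\cdots-n_p^5|\ge c_p\,n_1^4$; (V) $n_3^4|n_4|\ge c_p\,n_1^4$.
   Context: $\Phi_p(n_1,\dots,n_p)=n^5-\sum_{i=1}^pn_i^5$ where $n=\sum_{i=1}^pn_i$. The paper writes (III)–(V) with $\gtrsim$, i.e. up to an implicit constant; condition (II) is written as $n_1^*+n_2^*=0$, meaning the two frequencies of largest absolute value sum to zero, which under the stated ordering is $n_1+n_2=0$. *)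

theory Defs
  imports Complex_Main
begin

text \<open>Frequencies n_1,...,n_p are given as a function nat => int on indices 1..p.\<close>

definition freq_sum :: "nat \<Rightarrow> (nat \<Rightarrow> int) \<Rightarrow> int" where
  "freq_sum p ns = (\<Sum>i=1..p. ns i)"

definition Phi :: "nat \<Rightarrow> (nat \<Rightarrow> int) \<Rightarrow> int" where
  "Phi p ns = (freq_sum p ns) ^ 5 - (\<Sum>i=1..p. (ns i) ^ 5)"

end

theory Submission imports Defs begin

(* Write a = n_1, b = n_2 and r = n_3 + ... + n_p, so that n = a + b + r and
     Phi_p = [(a + b + r)^5 - a^5 - b^5 - r^5] + [r^5 - n_3^5 - ... - n_p^5].
   The first bracket factors as 5 (a + b) (b + r) (r + a) (a^2 + b^2 + r^2 + ab + br + ra).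
   If (I) and (II) fail, a + b and b + r are nonzero integers; if (III) fails, |r| <= |a|/2.
   Together these make the first bracket at least (5/64) a^4.  Expanding r = n_3 + (n_4 + ... + n_p)
   shows that the second bracket is O_p(n_3^4 |n_4|), so if (V) also fails it cannot cancel
   the first one. *)

lemma sum3_pow5_diff_factor:
  fixes a b r :: "'a::comm_ring_1"
  shows "(a + b + r) ^ 5 - a ^ 5 - b ^ 5 - r ^ 5
    = 5 * (a + b) * (b + r) * (r + a) * (a\<^sup>2 + b\<^sup>2 + r\<^sup>2 + a * b + b * r + r * a)"
  by (simp add: eval_nat_numeral algebra_simps)

lemma sum3_pow5_diff_lower_bound:
  fixes a b r :: int
  assumes r: "2 * \<bar>r\<bar> \<le> \<bar>a\<bar>" and ab: "1 \<le> \<bar>a + b\<bar>" and br: "1 \<le> \<bar>b + r\<bar>"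
  shows "5 * a ^ 4 \<le> 64 * \<bar>(a + b + r) ^ 5 - a ^ 5 - b ^ 5 - r ^ 5\<bar>"
proof -
  define q where "q = a\<^sup>2 + b\<^sup>2 + r\<^sup>2 + a * b + b * r + r * a"
  have ra: "\<bar>a\<bar> \<le> 2 * \<bar>r + a\<bar>" using r by arith
  have "2 * q = (a + b)\<^sup>2 + (b + r)\<^sup>2 + (r + a)\<^sup>2"
    unfolding q_def by (simp add: power2_eq_square algebra_simps)
  moreover have "a\<^sup>2 \<le> 4 * (r + a)\<^sup>2"
    using power_mono[OF ra, of 2] by (simp add: power_mult_distrib)
  ultimately have q: "a\<^sup>2 \<le> 8 * q"
    using zero_le_power2[of "a + b"] zero_le_power2[of "b + r"] by linarith
  \<comment> \<open>\<open>(a + b) - (b + r) = a - r\<close>: one factor is at least \<open>\<bar>a\<bar>/4\<close>, the other at least 1\<close>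
  have "\<bar>a\<bar> \<le> 4 * (\<bar>a + b\<bar> * \<bar>b + r\<bar>)"
  proof (cases "\<bar>a\<bar> \<le> 4 * \<bar>a + b\<bar>")
    case True
    then show ?thesis using mult_left_mono[OF br, of "\<bar>a + b\<bar>"] by simp
  next
    case False
    moreover have "\<bar>a\<bar> \<le> \<bar>a + b\<bar> + \<bar>b + r\<bar> + \<bar>r\<bar>"
      using abs_triangle_ineq[of "(a + b) - (b + r)" r] abs_triangle_ineq4[of "a + b" "b + r"] by simp
    ultimately have "\<bar>a\<bar> \<le> 4 * \<bar>b + r\<bar>" using r by linarith
    then show ?thesis using mult_right_mono[OF ab, of "\<bar>b + r\<bar>"] by simp
  qed
  then have "\<bar>a\<bar> * \<bar>a\<bar> * a\<^sup>2 \<le> 4 * (\<bar>a + b\<bar> * \<bar>b + r\<bar>) * (2 * \<bar>r + a\<bar>) * (8 * q)"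
    using ra q by (intro mult_mono) auto
  moreover have "\<bar>(a + b + r) ^ 5 - a ^ 5 - b ^ 5 - r ^ 5\<bar> = 5 * \<bar>a + b\<bar> * \<bar>b + r\<bar> * \<bar>r + a\<bar> * q"
  proof -
    have "0 \<le> q" using q zero_le_power2[of a] by linarith
    then show ?thesis
      unfolding sum3_pow5_diff_factor q_def[symmetric] by (simp only: abs_mult abs_numeral abs_of_nonneg)
  qed
  moreover have "\<bar>a\<bar> * \<bar>a\<bar> * a\<^sup>2 = a ^ 4" by (simp add: power2_eq_square power4_eq_xxxx abs_mult_self_eq)
  ultimately show ?thesis by (simp add: algebra_simps)
qed

lemma abs_power_add_diff_le:
  fixes t s :: "'a::linordered_idom"
  shows "\<bar>(t + s) ^ k - t ^ k\<bar> \<le> of_nat k * \<bar>s\<bar> * (\<bar>t\<bar> + \<bar>s\<bar>) ^ (k - 1)"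
proof -
  define B where "B = \<bar>t\<bar> + \<bar>s\<bar>"
  have term_le: "\<bar>t ^ (k - Suc i) * (t + s) ^ i\<bar> \<le> B ^ (k - 1)" if "i < k" for i
  proof -
    have "\<bar>t ^ (k - Suc i) * (t + s) ^ i\<bar> \<le> B ^ (k - Suc i) * B ^ i"
      unfolding abs_mult power_abs B_def
      by (intro mult_mono power_mono abs_triangle_ineq) auto
    also have "\<dots> = B ^ (k - 1)" using that by (simp flip: power_add)
    finally show ?thesis .
  qed
  have "\<bar>(t + s) ^ k - t ^ k\<bar> = \<bar>s\<bar> * \<bar>\<Sum>i<k. t ^ (k - Suc i) * (t + s) ^ i\<bar>"
    by (simp add: power_diff_sumr2 abs_mult)
  also have "\<dots> \<le> \<bar>s\<bar> * (of_nat k * B ^ (k - 1))"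
    using order_trans[OF sum_abs sum_bounded_above[of "{..<k}", OF term_le]]
    by (intro mult_left_mono) auto
  finally show ?thesis by (simp add: B_def mult_ac)
qed

lemma abs_sum_power_le:
  fixes x :: "'b \<Rightarrow> 'a::linordered_idom"
  assumes "\<forall>i\<in>I. \<bar>x i\<bar> \<le> B"
  shows "\<bar>\<Sum>i\<in>I. x i ^ k\<bar> \<le> of_nat (card I) * B ^ k"
proof -
  have "\<bar>x i ^ k\<bar> \<le> B ^ k" if "i \<in> I" for i
    using assms that by (simp add: power_abs power_mono)
  then show ?thesis by (rule order_trans[OF sum_abs sum_bounded_above])
qed

lemma abs_power_add_sum_diff_le:
  fixes t u :: "'a::linordered_idom" and x :: "'b \<Rightarrow> 'a"
  assumes tail: "\<forall>i\<in>I. \<bar>x i\<bar> \<le> \<bar>u\<bar>" and ut: "\<bar>u\<bar> \<le> \<bar>t\<bar>" and k: "k \<ge> 1"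
  defines "m \<equiv> of_nat (card I) :: 'a"
  shows "\<bar>(t + (\<Sum>i\<in>I. x i)) ^ k - t ^ k - (\<Sum>i\<in>I. x i ^ k)\<bar>
    \<le> (of_nat k * (m + 1) ^ (k - 1) + 1) * m * \<bar>t\<bar> ^ (k - 1) * \<bar>u\<bar>"
proof -
  define s where "s = (\<Sum>i\<in>I. x i)"
  have m: "m \<ge> 0" unfolding m_def by simp
  have s_u: "\<bar>s\<bar> \<le> m * \<bar>u\<bar>"
    using abs_sum_power_le[of I x "\<bar>u\<bar>" 1, OF tail] unfolding s_def m_def by simp
  then have "\<bar>t\<bar> + \<bar>s\<bar> \<le> (m + 1) * \<bar>t\<bar>"
    using mult_left_mono[OF ut m] by (simp add: distrib_right)
  then have "of_nat k * \<bar>s\<bar> * (\<bar>t\<bar> + \<bar>s\<bar>) ^ (k - 1) \<le> of_nat k * (m * \<bar>u\<bar>) * ((m + 1) * \<bar>t\<bar>) ^ (k - 1)"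
    using s_u by (intro mult_mono power_mono) auto
  with abs_power_add_diff_le[of t s k]
  have "\<bar>(t + s) ^ k - t ^ k\<bar> \<le> of_nat k * (m * \<bar>u\<bar>) * ((m + 1) * \<bar>t\<bar>) ^ (k - 1)"
    by order
  moreover have "\<bar>\<Sum>i\<in>I. x i ^ k\<bar> \<le> m * (\<bar>t\<bar> ^ (k - 1) * \<bar>u\<bar>)"
  proof -
    have "\<bar>u\<bar> ^ k = \<bar>u\<bar> ^ (k - 1) * \<bar>u\<bar>" using k by (simp flip: power_Suc2)
    also have "\<dots> \<le> \<bar>t\<bar> ^ (k - 1) * \<bar>u\<bar>" using ut by (simp add: mult_right_mono power_mono)
    finally have "of_nat (card I) * \<bar>u\<bar> ^ k \<le> m * (\<bar>t\<bar> ^ (k - 1) * \<bar>u\<bar>)"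
      unfolding m_def by (simp add: mult_left_mono)
    with abs_sum_power_le[of I x "\<bar>u\<bar>" k, OF tail] show ?thesis by order
  qed
  moreover have "of_nat k * (m * \<bar>u\<bar>) * ((m + 1) * \<bar>t\<bar>) ^ (k - 1) + m * (\<bar>t\<bar> ^ (k - 1) * \<bar>u\<bar>)
      = (of_nat k * (m + 1) ^ (k - 1) + 1) * m * \<bar>t\<bar> ^ (k - 1) * \<bar>u\<bar>"
    unfolding power_mult_distrib by (simp add: algebra_simps)
  ultimately show ?thesis
    unfolding s_def[symmetric] using abs_triangle_ineq4[of "(t + s) ^ k - t ^ k" "\<Sum>i\<in>I. x i ^ k"]
    by (simp add: diff_diff_eq)
qed

lemma antimono_chain_le:
  fixes f :: "nat \<Rightarrow> 'a::preorder"
  assumes "\<forall>i\<in>{1..<p}. f (i + 1) \<le> f i" and "1 \<le> j" "j \<le> i" "i \<le> p"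
  shows "f i \<le> f j"
  using assms(3,4)
proof (induction i rule: dec_induct)
  case (step i)
  then show ?case using assms(1,2) order_trans[of "f (Suc i)" "f i" "f j"] by auto
qed simp

lemma Phi_decompose:
  fixes ns :: "nat \<Rightarrow> int"
  assumes "p \<ge> 4"
  defines "s \<equiv> \<Sum>i=4..p. ns i"
  shows "freq_sum p ns = ns 1 + ns 2 + (ns 3 + s)"
    and "Phi p ns = ((ns 1 + ns 2 + (ns 3 + s)) ^ 5 - ns 1 ^ 5 - ns 2 ^ 5 - (ns 3 + s) ^ 5)
      + ((ns 3 + s) ^ 5 - ns 3 ^ 5 - (\<Sum>i=4..p. ns i ^ 5))"
proof -
  have split: "(\<Sum>i=1..p. f i) = f 1 + f 2 + f 3 + (\<Sum>i=4..p. f i)" for f :: "nat \<Rightarrow> int"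
    using assms by (simp add: sum.atLeast_Suc_atMost eval_nat_numeral add.assoc)
  show n: "freq_sum p ns = ns 1 + ns 2 + (ns 3 + s)"
    unfolding freq_sum_def split s_def by (simp add: add.assoc)
  show "Phi p ns = ((ns 1 + ns 2 + (ns 3 + s)) ^ 5 - ns 1 ^ 5 - ns 2 ^ 5 - (ns 3 + s) ^ 5)
      + ((ns 3 + s) ^ 5 - ns 3 ^ 5 - (\<Sum>i=4..p. ns i ^ 5))"
    unfolding Phi_def n split by simp
qed

lemma Phi_remainder_le:
  fixes ns :: "nat \<Rightarrow> int"
  assumes p: "p \<ge> 4" and sorted: "\<forall>i\<in>{1..<p}. \<bar>ns (i + 1)\<bar> \<le> \<bar>ns i\<bar>"
  shows "\<bar>(ns 3 + (\<Sum>i=4..p. ns i)) ^ 5 - ns 3 ^ 5 - (\<Sum>i=4..p. ns i ^ 5)\<bar>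
    \<le> 6 * int p ^ 5 * (ns 3 ^ 4 * \<bar>ns 4\<bar>)"
proof -
  define m where "m = int (p - 3)"
  have "\<forall>i\<in>{4..p}. \<bar>ns i\<bar> \<le> \<bar>ns 4\<bar>" and "\<bar>ns 4\<bar> \<le> \<bar>ns 3\<bar>"
    using antimono_chain_le[OF sorted] p by auto
  from abs_power_add_sum_diff_le[OF this, of 5]
  have "\<bar>(ns 3 + (\<Sum>i=4..p. ns i)) ^ 5 - ns 3 ^ 5 - (\<Sum>i=4..p. ns i ^ 5)\<bar>
      \<le> (5 * (m + 1) ^ 4 + 1) * m * (ns 3 ^ 4 * \<bar>ns 4\<bar>)"
    unfolding m_def by (simp add: power_abs mult.assoc)
  also have "\<dots> \<le> 6 * int p ^ 5 * (ns 3 ^ 4 * \<bar>ns 4\<bar>)"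
  proof (rule mult_right_mono)
    have "(5 * (m + 1) ^ 4 + 1) * m \<le> (5 * int p ^ 4 + int p ^ 4) * int p"
      unfolding m_def using p by (intro mult_mono add_mono power_mono) auto
    then show "(5 * (m + 1) ^ 4 + 1) * m \<le> 6 * int p ^ 5"
      by (simp add: eval_nat_numeral)
  qed simp
  finally show ?thesis .
qed

lemma Phi_lower_bound:
  fixes ns :: "nat \<Rightarrow> int"
  assumes p: "p \<ge> 4" and sorted: "\<forall>i\<in>{1..<p}. \<bar>ns (i + 1)\<bar> \<le> \<bar>ns i\<bar>"
    and nonres: "ns 1 \<noteq> freq_sum p ns" and ab: "ns 1 + ns 2 \<noteq> 0"
    and small: "2 * int (p - 2) * \<bar>ns 3\<bar> \<le> \<bar>ns 1\<bar>"
  shows "5 * ns 1 ^ 4 \<le> 64 * \<bar>Phi p ns\<bar> + 384 * int p ^ 5 * (ns 3 ^ 4 * \<bar>ns 4\<bar>)"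
proof -
  define a b t s where "a = ns 1" "b = ns 2" "t = ns 3" "s = (\<Sum>i=4..p. ns i)"
  define G where "G = (a + b + (t + s)) ^ 5 - a ^ 5 - b ^ 5 - (t + s) ^ 5"
  define E where "E = (t + s) ^ 5 - t ^ 5 - (\<Sum>i=4..p. ns i ^ 5)"
  note n = Phi_decompose(1)[OF p, of ns, folded a_b_t_s_def]
  have Phi: "Phi p ns = G + E"
    using Phi_decompose(2)[OF p, of ns] unfolding G_def E_def a_b_t_s_def .
  have E: "\<bar>E\<bar> \<le> 6 * int p ^ 5 * (ns 3 ^ 4 * \<bar>ns 4\<bar>)"
    using Phi_remainder_le[OF p sorted] unfolding E_def a_b_t_s_def .
  have "\<forall>i\<in>{4..p}. \<bar>ns i\<bar> \<le> \<bar>t\<bar>"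
    using antimono_chain_le[OF sorted] p unfolding a_b_t_s_def by auto
  then have "\<bar>s\<bar> \<le> int (p - 3) * \<bar>t\<bar>"
    using abs_sum_power_le[where k=1] unfolding a_b_t_s_def by fastforce
  then have "\<bar>t + s\<bar> \<le> int (p - 2) * \<bar>t\<bar>"
    using p abs_triangle_ineq[of t s] by (simp add: of_nat_diff algebra_simps)
  then have "2 * \<bar>t + s\<bar> \<le> 2 * int (p - 2) * \<bar>t\<bar>" by simp
  also note small[folded a_b_t_s_def]
  finally have "5 * a ^ 4 \<le> 64 * \<bar>G\<bar>"
    unfolding G_def using ab nonres unfolding n a_b_t_s_def
    by (intro sum3_pow5_diff_lower_bound) auto
  then show ?thesis
    using E abs_triangle_ineq2[of G "-E"] unfolding Phi a_b_t_s_def by simp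
qed

lemma Phi_large_if_nondegenerate:
  fixes ns :: "nat \<Rightarrow> int" and c :: real
  assumes p: "p \<ge> 4" and sorted: "\<forall>i\<in>{1..<p}. \<bar>ns (i + 1)\<bar> \<le> \<bar>ns i\<bar>"
    and nonres: "ns 1 \<noteq> freq_sum p ns" and ab: "ns 1 + ns 2 \<noteq> 0"
    and c: "2 * real (p - 2) * c \<le> 1" "(6 * real p ^ 5 + 1) * c \<le> 5 / 64"
    and III: "real_of_int \<bar>ns 3\<bar> < c * real_of_int \<bar>ns 1\<bar>"
    and V: "real_of_int (ns 3 ^ 4 * \<bar>ns 4\<bar>) < c * real_of_int (ns 1 ^ 4)"
  shows "c * real_of_int (ns 1 ^ 4) \<le> real_of_int \<bar>Phi p ns\<bar>"
proof -
  define x y v where "x = real_of_int (ns 1 ^ 4)" "y = real_of_int \<bar>Phi p ns\<bar>"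
    "v = real_of_int (ns 3 ^ 4 * \<bar>ns 4\<bar>)"
  have "2 * real (p - 2) * real_of_int \<bar>ns 3\<bar> \<le> real_of_int \<bar>ns 1\<bar>"
    using mult_left_mono[OF less_imp_le[OF III], of "2 * real (p - 2)"]
      mult_right_mono[OF c(1), of "real_of_int \<bar>ns 1\<bar>"] by (simp add: mult.assoc)
  then have "2 * int (p - 2) * \<bar>ns 3\<bar> \<le> \<bar>ns 1\<bar>"
    by (subst of_int_le_iff[symmetric, where 'a=real]) simp
  from Phi_lower_bound[OF p sorted nonres ab this]
  have "real_of_int (5 * ns 1 ^ 4) \<le> real_of_int (64 * \<bar>Phi p ns\<bar> + 384 * int p ^ 5 * (ns 3 ^ 4 * \<bar>ns 4\<bar>))"
    by (simp only: of_int_le_iff)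
  then have "5 * x \<le> 64 * y + 384 * (real p ^ 5 * v)"
    unfolding x_y_v_def by simp
  moreover have "real p ^ 5 * v \<le> real p ^ 5 * (c * x)"
    using V unfolding x_y_v_def by (intro mult_left_mono) auto
  moreover have "(6 * real p ^ 5 + 1) * c * x \<le> 5 / 64 * x"
    using c(2) unfolding x_y_v_def by (intro mult_right_mono) auto
  ultimately show ?thesis
    unfolding x_y_v_def[symmetric] by (simp add: algebra_simps)
qed

theorem proposition3p2:
  fixes p :: nat
  assumes "p \<ge> 4"
  shows "\<exists>c::real. c > 0 \<and>
    (\<forall>ns :: nat \<Rightarrow> int.
       (\<forall>i\<in>{1..p}. ns i \<noteq> 0) \<and> (\<forall>i\<in>{1..<p}. \<bar>ns (i+1)\<bar> \<le> \<bar>ns i\<bar>) \<longrightarrow>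
         (\<exists>i\<in>{1..p}. ns i = freq_sum p ns)
       \<or> ns 1 + ns 2 = 0
       \<or> real_of_int \<bar>ns 3\<bar> \<ge> c * real_of_int \<bar>ns 1\<bar>
       \<or> real_of_int \<bar>Phi p ns\<bar> \<ge> c * real_of_int (ns 1 ^ 4)
       \<or> real_of_int (ns 3 ^ 4 * \<bar>ns 4\<bar>) \<ge> c * real_of_int (ns 1 ^ 4))"
proof -
  define P where "P = real p ^ 5"
  define c where "c = 1 / (100 * P)"
  have "real (p - 2) \<le> P"
    unfolding P_def by (rule order_trans[OF _ self_le_power]) (use assms in auto)
  moreover have "4 ^ 5 \<le> P"
    unfolding P_def using assms by (intro power_mono) auto
  ultimately have c: "c > 0" "2 * real (p - 2) * c \<le> 1" "(6 * P + 1) * c \<le> 5 / 64"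
    unfolding c_def by (simp_all add: field_simps)
  show ?thesis
    using Phi_large_if_nondegenerate[OF assms _ _ _ c(2,3)[unfolded P_def]] c(1) assms
    by (intro exI[of _ c]) force
qed

end
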